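(* Let $p>0$, $k>0$ and $q=p\,e^{-2k^2}$ with $0<pq<1$, let $\zeta\in\mathbb R$, $\varrho\in\mathbb C$, $t\in\mathbb C$, $x\in\mathbb R$, and assume $p\,e^{-(2\zeta-(\operatorname{Im}\varrho)^2)k^2}<1$. Then $$E^{(\zeta+\varrho^2/2)}_{p,q}\big(te^{-\varrho kx}\big)e^{-x^2/2}=\frac1{\sqrt{2\pi}}\int_{-\infty}^{\infty}e^{ixy-y^2/2}E^{(\zeta)}_{p,q}\big(te^{i\varrho ky}\big)\,dy,$$ where for complex $s$ we set $E^{(s)}_{p,q}(z)=\sum_{n\ge0}e^{-s k^2n^2}\frac{z^n}{[p,q;p,q]_n}$ (which agrees with the definition below when $s$ is real, since $q/p=e^{-2k^2}$).
   Context: $[p,q;p,q]_n=\prod_{l=1}^n(p^{-l}-q^l)$ ($=1$ for $n=0$). For real $\zeta$, $E^{(\zeta)}_{p,q}(z)=\sum_{n\ge0}\big(\frac qp\big)^{\zeta n^2/2}\frac{z^n}{[p,q;p,q]_n}$. *)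

theory Defs
  imports "HOL-Analysis.Analysis"
begin

definition pqpoch :: "real \<Rightarrow> real \<Rightarrow> nat \<Rightarrow> real" where
  "pqpoch p q n = (\<Prod>l=1..n. inverse (p ^ l) - q ^ l)"

definition E_cplx :: "real \<Rightarrow> real \<Rightarrow> real \<Rightarrow> complex \<Rightarrow> complex \<Rightarrow> complex" where
  "E_cplx k p q s z = (\<Sum>n. exp (- s * complex_of_real (k ^ 2 * real n ^ 2))
                          * z ^ n / complex_of_real (pqpoch p q n))"

end

theory Submission
  imports Defs "HOL-Probability.Characteristic_Functions" "HOL-Real_Asymp.Real_Asymp"
begin

(* Write E^(s)(z) = sum_n a_n(s,z) with a_n(s,z) = exp(-s k^2 n^2) z^n / [p,q;p,q]_n.
   Multiplying the n-th term of E^(zeta)(t e^{i rho k y}) by exp(ixy - y^2/2) gives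
   a_n(zeta,t) exp(w_n y - y^2/2) with w_n = i(x + rho k n); by the complex Gaussian
   integral  int exp(w y - y^2/2) dy = sqrt(2 pi) exp(w^2/2)  its integral is
   sqrt(2 pi) a_n(zeta,t) exp(w_n^2/2), which is exactly sqrt(2 pi) exp(-x^2/2) times
   the n-th term of E^(zeta + rho^2/2)(t e^{-rho k x}).  The whole proof is therefore a
   termwise integration, justified by dominated convergence for series. *)

(* Growth of [p,q;p,q]_n: each factor p^{-l} - q^l is at least (1 - pq) p^{-l}, so the
   symbol grows like p^{-n(n+1)/2}; this is what makes E^(s) converge. *)

lemma pqpoch_Suc: "pqpoch p q (Suc n) = pqpoch p q n * (inverse (p ^ Suc n) - q ^ Suc n)"
  unfolding pqpoch_def by (simp add: prod.cl_ivl_Suc)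

lemma pqpoch_lower_bound:
  assumes p: "p > 0" and pq: "0 < p * q" "p * q < 1"
  shows "pqpoch p q n \<ge> (1 - p * q) ^ n * exp (- ln p * (real n * (real n + 1) / 2))"
proof (induction n)
  case 0
  then show ?case by (simp add: pqpoch_def)
next
  case (Suc n)
  define m where "m = Suc n"
  have pm: "p ^ m = exp (real m * ln p)" using p by (simp add: exp_of_nat_mult)
  have "(p * q) ^ m \<le> p * q"
    using pq power_decreasing[of 1 m "p * q"] by (simp add: m_def)
  then have factor: "inverse (p ^ m) - q ^ m \<ge> (1 - p * q) * exp (- ln p * real m)"
    using p by (simp add: pm exp_minus power_mult_distrib field_simps)
  have "(1 - p * q) ^ m * exp (- ln p * (real m * (real m + 1) / 2))
      = ((1 - p * q) ^ n * exp (- ln p * (real n * (real n + 1) / 2))) * ((1 - p * q) * exp (- ln p * real m))"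
    unfolding m_def by (simp add: exp_add[symmetric] algebra_simps add_divide_distrib)
  also have "\<dots> \<le> pqpoch p q n * (inverse (p ^ m) - q ^ m)"
    by (rule mult_mono'[OF Suc.IH factor]) (use pq in auto)
  finally show ?case unfolding m_def pqpoch_Suc .
qed

lemma pqpoch_pos:
  assumes "p > 0" and "0 < p * q" and "p * q < 1"
  shows "pqpoch p q n > 0"
  by (rule less_le_trans[OF _ pqpoch_lower_bound[OF assms]]) (use assms in simp)

lemma summable_power_times_gaussian:
  fixes a B :: real
  assumes a: "a > 0" and B: "B \<ge> 0"
  shows "summable (\<lambda>n::nat. B ^ n * exp (- a * real n ^ 2))"
proof (rule summable_comparison_test_ev[of _ "\<lambda>n. (1/2) ^ n"])
  have "(\<lambda>n::nat. B * exp (- a * real n)) \<longlonglongrightarrow> 0" using a by real_asymp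
  from order_tendstoD(2)[OF this, of "1/2"]
  have "eventually (\<lambda>n. B * exp (- a * real n) < 1/2) sequentially" by simp
  then show "eventually (\<lambda>n. norm (B ^ n * exp (- a * real n ^ 2)) \<le> (1/2) ^ n) sequentially"
  proof eventually_elim
    case (elim n)
    have "norm (B ^ n * exp (- a * real n ^ 2)) = (B * exp (- a * real n)) ^ n"
      using B by (simp add: power_mult_distrib exp_of_nat_mult[symmetric] power2_eq_square)
    also have "\<dots> \<le> (1/2) ^ n" by (rule power_mono) (use elim B in auto)
    finally show ?case .
  qed
qed simp

(* The real majorant series of E^(s): under p e^{-2s} < 1 the lower bound for
   [p,q;p,q]_n leaves a Gaussian factor exp(-(s - ln p / 2) n^2) with positive rate. *)
lemma summable_pq_gaussian_series:
  fixes p q s r :: real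
  assumes p: "p > 0" and pq: "0 < p * q" "p * q < 1"
    and s: "p * exp (- 2 * s) < 1" and r: "r \<ge> 0"
  shows "summable (\<lambda>n. r ^ n * exp (- s * real n ^ 2) / pqpoch p q n)"
proof -
  define \<delta> where "\<delta> = 1 - p * q"
  define a where "a = s - ln p / 2"
  define B where "B = r * exp (ln p / 2) / \<delta>"
  have \<delta>: "\<delta> > 0" using pq by (simp add: \<delta>_def)
  have a: "a > 0"
  proof -
    have "exp (ln p - 2 * s) < 1" using p s by (simp add: exp_diff exp_minus field_simps)
    then show ?thesis by (simp add: a_def)
  qed
  have bound: "r ^ n * exp (- s * real n ^ 2) / pqpoch p q n \<le> B ^ n * exp (- a * real n ^ 2)" for n
  proof -
    have lower: "\<delta> ^ n * exp (- ln p * (real n * (real n + 1) / 2)) \<le> pqpoch p q n"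
      unfolding \<delta>_def by (rule pqpoch_lower_bound[OF p pq])
    have "r ^ n * exp (- s * real n ^ 2) / pqpoch p q n
        \<le> r ^ n * exp (- s * real n ^ 2) / (\<delta> ^ n * exp (- ln p * (real n * (real n + 1) / 2)))"
      by (rule divide_left_mono[OF lower]) (use \<delta> r pqpoch_pos[OF p pq] in auto)
    also have "\<dots> = (r / \<delta>) ^ n * (exp (- s * real n ^ 2) / exp (- ln p * (real n * (real n + 1) / 2)))"
      by (simp add: power_divide)
    also have "exp (- s * real n ^ 2) / exp (- ln p * (real n * (real n + 1) / 2))
        = exp (real n * (ln p / 2) + (- a * real n ^ 2))"
      unfolding exp_diff[symmetric] by (simp add: a_def power2_eq_square field_simps)
    also have "(r / \<delta>) ^ n * \<dots> = B ^ n * exp (- a * real n ^ 2)"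
      unfolding exp_add exp_of_nat_mult B_def by (simp add: power_mult_distrib power_divide)
    finally show ?thesis .
  qed
  have "summable (\<lambda>n. B ^ n * exp (- a * real n ^ 2))"
    by (rule summable_power_times_gaussian[OF a]) (use r \<delta> in \<open>simp add: B_def\<close>)
  then show ?thesis
    by (rule summable_comparison_test') (use bound r pqpoch_pos[OF p pq] in \<open>simp add: less_imp_le\<close>)
qed

(* Gaussian integrals, obtained from the standard normal density and its characteristic
   function exp(-c^2/2). *)

lemma std_gaussian_integrable: "integrable lborel (\<lambda>u::real. exp (- (u ^ 2) / 2))"
proof -
  have "integrable lborel (\<lambda>u. sqrt (2 * pi) * std_normal_density u)" by simp
  then show ?thesis by (simp add: std_normal_density_def)
qed

lemma std_gaussian_fourier:
  fixes c :: real
  shows "integrable lborel (\<lambda>u::real. complex_of_real (exp (- (u ^ 2) / 2)) * exp (\<i> * complex_of_real (c * u)))"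
    and "(\<integral>u. complex_of_real (exp (- (u ^ 2) / 2)) * exp (\<i> * complex_of_real (c * u)) \<partial>lborel)
          = complex_of_real (sqrt (2 * pi) * exp (- (c ^ 2) / 2))"
proof -
  show "integrable lborel (\<lambda>u::real. complex_of_real (exp (- (u ^ 2) / 2)) * exp (\<i> * complex_of_real (c * u)))"
    by (rule Bochner_Integration.integrable_bound[OF std_gaussian_integrable]) (auto simp: norm_mult)
  have "complex_of_real (exp (- (c ^ 2) / 2)) = char std_normal_distribution c"
    by (simp add: char_std_normal_distribution)
  also have "\<dots> = (\<integral>u. std_normal_density u *\<^sub>R exp (\<i> * complex_of_real (c * u)) \<partial>lborel)"
    unfolding char_def by (subst integral_density) auto
  also have "\<dots> = (\<integral>u. complex_of_real (1 / sqrt (2 * pi))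
                     * (complex_of_real (exp (- (u ^ 2) / 2)) * exp (\<i> * complex_of_real (c * u))) \<partial>lborel)"
    by (intro Bochner_Integration.integral_cong) (auto simp: std_normal_density_def scaleR_conv_of_real)
  finally show "(\<integral>u. complex_of_real (exp (- (u ^ 2) / 2)) * exp (\<i> * complex_of_real (c * u)) \<partial>lborel)
          = complex_of_real (sqrt (2 * pi) * exp (- (c ^ 2) / 2))"
    by (simp add: field_simps)
qed

(* The Gaussian integral with a complex linear term: shifting y by Re w reduces it to the
   Fourier transform of the standard Gaussian at Im w. *)
lemma gaussian_integral_complex:
  fixes w :: complex
  shows "integrable lborel (\<lambda>y::real. exp (w * complex_of_real y - complex_of_real (y ^ 2 / 2)))"
    and "(\<integral>y. exp (w * complex_of_real y - complex_of_real (y ^ 2 / 2)) \<partial>lborel)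
          = complex_of_real (sqrt (2 * pi)) * exp (w ^ 2 / 2)"
proof -
  define b c where "b = Re w" and "c = Im w"
  define g where "g y = exp (w * complex_of_real y - complex_of_real (y ^ 2 / 2))" for y :: real
  define C where "C = exp (w * complex_of_real b - complex_of_real (b ^ 2 / 2))"
  have w: "w = complex_of_real b + \<i> * complex_of_real c"
    unfolding b_def c_def by (simp add: complex_eq_iff)
  have shift: "g (b + 1 * u) = C * (complex_of_real (exp (- (u ^ 2) / 2)) * exp (\<i> * complex_of_real (c * u)))"
    for u :: real
  proof -
    have "w * complex_of_real (b + 1 * u) - complex_of_real ((b + 1 * u) ^ 2 / 2)
        = (w * complex_of_real b - complex_of_real (b ^ 2 / 2))
          + (complex_of_real (- (u ^ 2) / 2) + \<i> * complex_of_real (c * u))"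
      by (simp add: w power2_eq_square field_simps)
    then show ?thesis unfolding g_def C_def by (simp only: exp_add exp_of_real)
  qed
  have "integrable lborel (\<lambda>u. g (b + 1 * u))"
    unfolding shift by (intro integrable_mult_right std_gaussian_fourier(1))
  then have "integrable lborel g"
    using lborel_integrable_real_affine_iff[of 1 g b] by simp
  then show "integrable lborel (\<lambda>y::real. exp (w * complex_of_real y - complex_of_real (y ^ 2 / 2)))"
    unfolding g_def .
  have "(\<integral>y. g y \<partial>lborel) = (\<integral>u. g (b + 1 * u) \<partial>lborel)"
    using lborel_integral_real_affine[of 1 g b] by simp
  also have "\<dots> = C * complex_of_real (sqrt (2 * pi) * exp (- (c ^ 2) / 2))"
    unfolding shift by (simp only: integral_mult_right_zero std_gaussian_fourier(2))
  also have "\<dots> = complex_of_real (sqrt (2 * pi)) * exp (w * complex_of_real b - complex_of_real (b ^ 2 / 2) + complex_of_real (- (c ^ 2) / 2))"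
    unfolding C_def by (simp only: exp_add exp_of_real of_real_mult mult_ac)
  also have "w * complex_of_real b - complex_of_real (b ^ 2 / 2) + complex_of_real (- (c ^ 2) / 2) = w ^ 2 / 2"
    by (simp add: w power2_eq_square algebra_simps)
  finally show "(\<integral>y. exp (w * complex_of_real y - complex_of_real (y ^ 2 / 2)) \<partial>lborel)
          = complex_of_real (sqrt (2 * pi)) * exp (w ^ 2 / 2)"
    by (simp add: g_def)
qed

(* The real special case, needed to integrate the absolute values of the terms. *)
lemma gaussian_integral_real:
  fixes b :: real
  shows "(\<integral>y. exp (b * y - y ^ 2 / 2) \<partial>lborel) = sqrt (2 * pi) * exp (b ^ 2 / 2)"
proof -
  have "complex_of_real (\<integral>y. exp (b * y - y ^ 2 / 2) \<partial>lborel)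
      = (\<integral>y. exp (complex_of_real b * complex_of_real y - complex_of_real (y ^ 2 / 2)) \<partial>lborel)"
    by (simp flip: integral_complex_of_real exp_of_real)
  also have "\<dots> = complex_of_real (sqrt (2 * pi)) * exp (complex_of_real b ^ 2 / 2)"
    by (rule gaussian_integral_complex(2))
  also have "\<dots> = complex_of_real (sqrt (2 * pi) * exp (b ^ 2 / 2))"
    by (simp flip: exp_of_real)
  finally show ?thesis by (simp only: of_real_eq_iff)
qed


(* If the coefficients satisfy
   sum |A_n| exp((Re w_n)^2/2) < oo, then every term is bounded by |A_n| exp((Re w_n)^2/2)
   uniformly in y, and so is its L1 norm up to sqrt(2 pi); hence the series converges
   pointwise, the sum is integrable and may be integrated term by term. *)
lemma gaussian_series_integral:
  fixes A w :: "nat \<Rightarrow> complex"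
  assumes summ: "summable (\<lambda>n. norm (A n) * exp (Re (w n) ^ 2 / 2))"
  shows "summable (\<lambda>n. A n * exp (w n * complex_of_real y - complex_of_real (y ^ 2 / 2)))"
    and "summable (\<lambda>n. A n * exp (w n ^ 2 / 2))"
    and "integrable lborel (\<lambda>y::real. \<Sum>n. A n * exp (w n * complex_of_real y - complex_of_real (y ^ 2 / 2)))"
    and "(\<integral>y. (\<Sum>n. A n * exp (w n * complex_of_real y - complex_of_real (y ^ 2 / 2))) \<partial>lborel)
          = complex_of_real (sqrt (2 * pi)) * (\<Sum>n. A n * exp (w n ^ 2 / 2))"
proof -
  define M where "M n = norm (A n) * exp (Re (w n) ^ 2 / 2)" for n
  define f where "f n y = A n * exp (w n * complex_of_real y - complex_of_real (y ^ 2 / 2))"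
    for n and y :: real
  have norm_f: "norm (f n y) = norm (A n) * exp (Re (w n) * y - y ^ 2 / 2)" for n y
    by (simp add: f_def norm_mult)
  have f_le: "norm (f n y) \<le> M n" for n y
  proof -
    have "Re (w n) * y - y ^ 2 / 2 \<le> Re (w n) ^ 2 / 2"
      using sum_squares_ge_zero[of "y - Re (w n)" 0] by (simp add: power2_eq_square algebra_simps)
    then show ?thesis unfolding norm_f M_def by (intro mult_left_mono) auto
  qed
  have norm_summable: "summable (\<lambda>n. norm (f n y))" for y
    by (rule summable_comparison_test'[OF summ]) (use f_le in \<open>simp add: M_def\<close>)
  then show "summable (\<lambda>n. A n * exp (w n * complex_of_real y - complex_of_real (y ^ 2 / 2)))"
    unfolding f_def[symmetric] by (rule summable_norm_cancel)
  have value_le: "norm (A n * exp (w n ^ 2 / 2)) \<le> M n" for n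
  proof -
    have "Re (w n ^ 2 / 2) \<le> Re (w n) ^ 2 / 2" by (simp add: power2_eq_square)
    then show ?thesis unfolding M_def by (simp add: norm_mult mult_left_mono)
  qed
  show "summable (\<lambda>n. A n * exp (w n ^ 2 / 2))"
    by (rule summable_comparison_test'[OF summ]) (use value_le in \<open>simp add: M_def\<close>)
  have f_integrable: "integrable lborel (f n)" for n
    unfolding f_def by (intro integrable_mult_right gaussian_integral_complex(1))
  have f_integral: "integral\<^sup>L lborel (f n) = complex_of_real (sqrt (2 * pi)) * (A n * exp (w n ^ 2 / 2))" for n
    unfolding f_def integral_mult_right_zero gaussian_integral_complex(2) by (simp only: mult_ac)
  have "(\<integral>y. norm (f n y) \<partial>lborel) = sqrt (2 * pi) * M n" for n
    by (simp add: norm_f gaussian_integral_real M_def)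
  then have norm_integral_summable: "summable (\<lambda>n. \<integral>y. norm (f n y) \<partial>lborel)"
    using summ by (simp add: M_def summable_mult)
  note termwise = integrable_suminf[OF f_integrable _ norm_integral_summable]
    integral_suminf[OF f_integrable _ norm_integral_summable]
  show "integrable lborel (\<lambda>y::real. \<Sum>n. A n * exp (w n * complex_of_real y - complex_of_real (y ^ 2 / 2)))"
    using termwise(1) norm_summable unfolding f_def by simp
  have "(\<integral>y. (\<Sum>n. f n y) \<partial>lborel) = (\<Sum>n. integral\<^sup>L lborel (f n))"
    using termwise(2) norm_summable by simp
  also have "\<dots> = complex_of_real (sqrt (2 * pi)) * (\<Sum>n. A n * exp (w n ^ 2 / 2))"
    unfolding f_integral by (rule suminf_mult[OF \<open>summable (\<lambda>n. A n * exp (w n ^ 2 / 2))\<close>])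
  finally show "(\<integral>y. (\<Sum>n. A n * exp (w n * complex_of_real y - complex_of_real (y ^ 2 / 2))) \<partial>lborel)
          = complex_of_real (sqrt (2 * pi)) * (\<Sum>n. A n * exp (w n ^ 2 / 2))"
    unfolding f_def .
qed


definition E_term :: "real \<Rightarrow> real \<Rightarrow> real \<Rightarrow> complex \<Rightarrow> complex \<Rightarrow> nat \<Rightarrow> complex" where
  "E_term k p q s z n = exp (- s * complex_of_real (k ^ 2 * real n ^ 2)) * z ^ n / complex_of_real (pqpoch p q n)"

lemma E_cplx_eq_suminf: "E_cplx k p q s z = (\<Sum>n. E_term k p q s z n)"
  unfolding E_cplx_def E_term_def ..

lemma norm_E_term:
  assumes "p > 0" and "0 < p * q" and "p * q < 1"
  shows "norm (E_term k p q (complex_of_real \<zeta>) t n) = norm t ^ n * exp (- \<zeta> * k ^ 2 * real n ^ 2) / pqpoch p q n"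
  using pqpoch_pos[OF assms, of n] by (simp add: E_term_def norm_mult norm_divide norm_power exp_of_real[symmetric] mult_ac)

lemma E_term_rotated:
  fixes s :: complex and k x y :: real
  shows "exp (\<i> * complex_of_real (x * y) - complex_of_real (y ^ 2 / 2)) * E_term k p q s (t * exp (\<i> * \<rho> * complex_of_real (k * y))) n
    = E_term k p q s t n * exp ((\<i> * complex_of_real x + \<i> * \<rho> * complex_of_real (k * real n)) * complex_of_real y - complex_of_real (y ^ 2 / 2))"
proof -
  define a where "a = \<i> * complex_of_real (x * y) - complex_of_real (y ^ 2 / 2)"
  define b where "b = - s * complex_of_real (k ^ 2 * real n ^ 2)"
  define r where "r = \<i> * \<rho> * complex_of_real (k * y)"
  define e where "e = (\<i> * complex_of_real x + \<i> * \<rho> * complex_of_real (k * real n)) * complex_of_real y - complex_of_real (y ^ 2 / 2)"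
  define c where "c = complex_of_real (pqpoch p q n)"
  have "exp a * (exp b * (t * exp r) ^ n / c) = t ^ n / c * exp (a + b + of_nat n * r)"
    by (simp add: power_mult_distrib exp_add exp_of_nat_mult)
  also have "a + b + of_nat n * r = b + e"
    unfolding a_def b_def r_def e_def by (simp add: algebra_simps)
  also have "t ^ n / c * exp (b + e) = exp b * t ^ n / c * exp e"
    by (simp add: exp_add)
  finally show ?thesis
    unfolding E_term_def a_def b_def r_def e_def c_def .
qed

(* The left-hand side, term by term: completing the square shows that a term of
   E^(s + rho^2/2)(t e^{-rho k x}) times exp(-x^2/2) equals the corresponding coefficient
   of E^(s)(t) times exp(w_n^2/2), the value of the n-th Gaussian integral. *)
lemma E_term_shifted:
  fixes s :: complex and k x :: real
  shows "E_term k p q (s + \<rho> ^ 2 / 2) (t * exp (- \<rho> * complex_of_real (k * x))) n * complex_of_real (exp (- (x ^ 2) / 2))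
    = E_term k p q s t n * exp ((\<i> * complex_of_real x + \<i> * \<rho> * complex_of_real (k * real n)) ^ 2 / 2)"
proof -
  define a where "a = - (s + \<rho> ^ 2 / 2) * complex_of_real (k ^ 2 * real n ^ 2)"
  define r where "r = - \<rho> * complex_of_real (k * x)"
  define g where "g = complex_of_real (- (x ^ 2) / 2)"
  define b where "b = - s * complex_of_real (k ^ 2 * real n ^ 2)"
  define e where "e = (\<i> * complex_of_real x + \<i> * \<rho> * complex_of_real (k * real n)) ^ 2 / 2"
  define c where "c = complex_of_real (pqpoch p q n)"
  have "exp a * (t * exp r) ^ n / c * exp g = t ^ n / c * exp (a + of_nat n * r + g)"
    by (simp add: power_mult_distrib exp_add exp_of_nat_mult)
  also have "a + of_nat n * r + g = b + e"
    unfolding a_def r_def g_def b_def e_def by (simp add: power2_eq_square field_simps)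
  also have "t ^ n / c * exp (b + e) = exp b * t ^ n / c * exp e"
    by (simp add: exp_add)
  finally show ?thesis
    unfolding E_term_def a_def r_def g_def b_def e_def c_def exp_of_real .
qed


(* The hypothesis p e^{-(2 zeta - c^2) k^2} < 1 is exactly what makes the coefficients of
   E^(zeta)(t), weighted by exp((c k n)^2/2) = exp((Re w_n)^2/2) for c = Im rho, summable. *)
lemma summable_E_term_weighted:
  fixes p q k \<zeta> c :: real and t :: complex
  assumes p: "p > 0" and pq: "0 < p * q" "p * q < 1"
    and decay: "p * exp (- (2 * \<zeta> - c ^ 2) * k ^ 2) < 1"
  shows "summable (\<lambda>n. norm (E_term k p q (complex_of_real \<zeta>) t n) * exp ((c * k * real n) ^ 2 / 2))"
proof -
  define s where "s = (\<zeta> - c ^ 2 / 2) * k ^ 2"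
  have "p * exp (- 2 * s) < 1"
    using decay by (simp add: s_def algebra_simps)
  then have "summable (\<lambda>n. norm t ^ n * exp (- s * real n ^ 2) / pqpoch p q n)"
    by (rule summable_pq_gaussian_series[OF p pq]) simp
  moreover have "norm (E_term k p q (complex_of_real \<zeta>) t n) * exp ((c * k * real n) ^ 2 / 2)
      = norm t ^ n * exp (- s * real n ^ 2) / pqpoch p q n" for n
    unfolding norm_E_term[OF p pq] s_def
    by (simp add: exp_add[symmetric] power_mult_distrib algebra_simps)
  ultimately show ?thesis by simp
qed

theorem mainTheorem7:
  fixes p k q \<zeta> x :: real and \<rho> t :: complex
  assumes "p > 0" and "k > 0" and "q = p * exp (- 2 * k ^ 2)"
    and "0 < p * q" and "p * q < 1"
    and "p * exp (- (2 * \<zeta> - (Im \<rho>) ^ 2) * k ^ 2) < 1"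
  shows "integrable lborel (\<lambda>y::real. exp (\<i> * complex_of_real (x * y) - complex_of_real (y ^ 2 / 2))
            * E_cplx k p q (complex_of_real \<zeta>) (t * exp (\<i> * \<rho> * complex_of_real (k * y))))
    \<and> E_cplx k p q (complex_of_real \<zeta> + \<rho> ^ 2 / 2) (t * exp (- \<rho> * complex_of_real (k * x)))
        * complex_of_real (exp (- (x ^ 2) / 2))
      = complex_of_real (1 / sqrt (2 * pi)) *
        integral\<^sup>L lborel (\<lambda>y::real. exp (\<i> * complex_of_real (x * y) - complex_of_real (y ^ 2 / 2))
            * E_cplx k p q (complex_of_real \<zeta>) (t * exp (\<i> * \<rho> * complex_of_real (k * y))))"
proof -
  define A where "A = E_term k p q (complex_of_real \<zeta>) t"
  define w where "w n = \<i> * complex_of_real x + \<i> * \<rho> * complex_of_real (k * real n)" for n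
  have "Re (w n) ^ 2 = (Im \<rho> * k * real n) ^ 2" for n
    by (simp add: w_def power2_eq_square)
  then have "summable (\<lambda>n. norm (A n) * exp (Re (w n) ^ 2 / 2))"
    using summable_E_term_weighted[OF assms(1,4,5,6)] by (simp add: A_def)
  note series = gaussian_series_integral[OF this]
  have integrand: "(\<lambda>y::real. exp (\<i> * complex_of_real (x * y) - complex_of_real (y ^ 2 / 2))
        * E_cplx k p q (complex_of_real \<zeta>) (t * exp (\<i> * \<rho> * complex_of_real (k * y))))
      = (\<lambda>y. \<Sum>n. A n * exp (w n * complex_of_real y - complex_of_real (y ^ 2 / 2)))"
  proof
    fix y :: real
    define g where "g = exp (\<i> * complex_of_real (x * y) - complex_of_real (y ^ 2 / 2))"
    define T where "T = E_term k p q (complex_of_real \<zeta>) (t * exp (\<i> * \<rho> * complex_of_real (k * y)))"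
    have terms: "g * T n = A n * exp (w n * complex_of_real y - complex_of_real (y ^ 2 / 2))" for n
      unfolding g_def T_def A_def w_def by (rule E_term_rotated)
    have "summable (\<lambda>n. g * T n)"
      unfolding terms by (rule series(1))
    then have "summable T"
      by (simp add: summable_cmult_iff g_def)
    then show "g * E_cplx k p q (complex_of_real \<zeta>) (t * exp (\<i> * \<rho> * complex_of_real (k * y)))
        = (\<Sum>n. A n * exp (w n * complex_of_real y - complex_of_real (y ^ 2 / 2)))"
      unfolding E_cplx_eq_suminf T_def[symmetric] terms[symmetric] by (rule suminf_mult[symmetric])
  qed
  have lhs: "E_cplx k p q (complex_of_real \<zeta> + \<rho> ^ 2 / 2) (t * exp (- \<rho> * complex_of_real (k * x)))
      * complex_of_real (exp (- (x ^ 2) / 2)) = (\<Sum>n. A n * exp (w n ^ 2 / 2))"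
  proof -
    define g where "g = complex_of_real (exp (- (x ^ 2) / 2))"
    define T where "T = E_term k p q (complex_of_real \<zeta> + \<rho> ^ 2 / 2) (t * exp (- \<rho> * complex_of_real (k * x)))"
    have terms: "T n * g = A n * exp (w n ^ 2 / 2)" for n
      unfolding g_def T_def A_def w_def by (rule E_term_shifted)
    have "summable T"
      using series(2) summable_divide[of "\<lambda>n. T n * g" g] by (simp flip: terms add: g_def)
    then show ?thesis
      unfolding E_cplx_eq_suminf T_def[symmetric] g_def[symmetric] by (simp flip: terms add: suminf_mult2)
  qed
  show ?thesis
    unfolding integrand lhs using series(3,4) by simp
qed

end
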